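(* Suppose $s_0,\dots,s_7\in\sum\mathbb{R}(x,y,z)^2$ satisfy $$s_0\,xy+s_1\,z=s_2+s_3\,x+s_4\,y+s_5\,xz+s_6\,yz+s_7\,xyz.$$ Then $s_i=0$ for all $i=0,\dots,7$.
   Context: $\mathbb{R}(x,y,z)$ is the field of rational functions in three real variables and $\sum\mathbb{R}(x,y,z)^2$ is the set of finite sums of squares of its elements. *)

theory Defs
  imports "HOL-Computational_Algebra.Polynomial" "HOL-Computational_Algebra.Fraction_Field"
begin

text \<open>Real polynomials in three variables x, y, z, realised as iterated univariate
  polynomials: z is the outermost variable, then y, then x (innermost).\<close>
type_synonym rpoly3 = "real poly poly poly"

type_synonym rfun3 = "rpoly3 fract"

definition polyX :: rpoly3 where "polyX = [:[:[:0, 1:]:]:]"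
definition polyY :: rpoly3 where "polyY = [:[:0, 1:]:]"
definition polyZ :: rpoly3 where "polyZ = [:0, 1:]"

definition varX :: rfun3 where "varX = Fract polyX 1"
definition varY :: rfun3 where "varY = Fract polyY 1"
definition varZ :: rfun3 where "varZ = Fract polyZ 1"

definition sos :: "rfun3 set" where
  "sos = {f. \<exists>fs :: rfun3 list. f = sum_list (map (\<lambda>g. g ^ 2) fs)}"

end

theory Submission
  imports Defs "HOL-Library.Product_Lexorder" "HOL-Computational_Algebra.Polynomial_Factorial"
begin

(* Clearing a common square denominator turns the identity into one between
   polynomials  Q0 xy + Q1 z = Q2 + Q3 x + Q4 y + Q5 xz + Q6 yz + Q7 xyz, where every Q i is a
   sum of squares of polynomials.  View R[x,y,z] as ((R[x])[y])[z] and order monomials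
   lexicographically (z, then y, then x).
   (1) A sum of squares of polynomials has a leading monomial with all exponents even (and a
       positive leading coefficient); this holds because the property "zero, or even degree
       and good leading coefficient" lifts from a coefficient ring to its polynomial ring
       whenever "good" is closed under sums and products, contains squares and admits no
       cancellation (locale pointed_cone).
   (2) The leading exponent behaves like a valuation: it cannot grow under addition, and a
       strictly dominant summand survives (locale leading_valuation, again lifted through
       each polynomial layer).  Hence a vanishing sum whose nonzero terms have pairwise
       distinct leading exponents has only zero terms.
   (3) The eight terms Q i * m i have leading exponents of the eight distinct parity
       patterns of the monomials m i, so they all vanish; hence all s i vanish. *)

lemma add_lower_degree:
  fixes p q :: "'a::comm_ring_1 poly"
  assumes "degree q < degree p"
  shows "degree (p + q) = degree p \<and> lead_coeff (p + q) = lead_coeff p \<and> p + q \<noteq> 0"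
proof -
  have deg: "degree (p + q) = degree p" by (rule degree_add_eq_left[OF assms])
  have lc: "lead_coeff (p + q) = lead_coeff p"
    using lead_coeff_add_le[OF assms] by (simp add: add.commute)
  have "p + q \<noteq> 0" using deg assms by auto
  with deg lc show ?thesis by simp
qed

lemma add_same_degree:
  fixes p q :: "'a::comm_ring_1 poly"
  assumes "degree p = degree q" "lead_coeff p + lead_coeff q \<noteq> 0"
  shows "degree (p + q) = degree p \<and> lead_coeff (p + q) = lead_coeff p + lead_coeff q \<and> p + q \<noteq> 0"
proof -
  have c: "coeff (p + q) (degree p) = lead_coeff p + lead_coeff q" using assms by simp
  have "degree (p + q) \<le> degree p" using degree_add_le[of p "degree p" q] assms by simp
  moreover have "degree p \<le> degree (p + q)" using c assms(2) le_degree by metis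
  ultimately have d: "degree (p + q) = degree p" by simp
  have "p + q \<noteq> 0" using c assms(2) by (metis coeff_0)
  then show ?thesis using c d by simp
qed

section \<open>Pointed cones and their lifting to polynomials\<close>

text \<open>A predicate behaving like the nonnegative reals: closed under sums and products,
  containing all squares, and such that a nonzero good element cannot be cancelled.\<close>
locale pointed_cone =
  fixes G :: "'a::idom \<Rightarrow> bool"
  assumes cone_add: "G a \<Longrightarrow> G b \<Longrightarrow> G (a + b)"
    and cone_no_cancel: "G a \<Longrightarrow> G b \<Longrightarrow> a \<noteq> 0 \<Longrightarrow> a + b \<noteq> 0"
    and cone_mult: "G a \<Longrightarrow> G b \<Longrightarrow> G (a * b)"
    and cone_square: "G (a * a)"

definition lead_cone :: "('a::idom \<Rightarrow> bool) \<Rightarrow> 'a poly \<Rightarrow> bool" where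
  "lead_cone G p \<longleftrightarrow> p = 0 \<or> (even (degree p) \<and> G (lead_coeff p))"

context pointed_cone
begin

lemma lead_cone_add:
  assumes "lead_cone G p" "lead_cone G q"
  shows "lead_cone G (p + q) \<and> (p \<noteq> 0 \<longrightarrow> p + q \<noteq> 0)"
proof (cases "p = 0 \<or> q = 0")
  case True
  then show ?thesis using assms by auto
next
  case False
  then have gp: "even (degree p)" "G (lead_coeff p)" and gq: "even (degree q)" "G (lead_coeff q)"
    using assms by (auto simp: lead_cone_def)
  consider "degree p < degree q" | "degree q < degree p" | "degree p = degree q" by linarith
  then show ?thesis
  proof cases
    case 1
    then show ?thesis using add_lower_degree[OF 1] gq by (auto simp: lead_cone_def add.commute)
  next
    case 2
    then show ?thesis using add_lower_degree[OF 2] gp by (auto simp: lead_cone_def)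
  next
    case 3
    have "lead_coeff p + lead_coeff q \<noteq> 0" using cone_no_cancel gp gq False by simp
    from add_same_degree[OF 3 this] show ?thesis using gp gq cone_add by (auto simp: lead_cone_def)
  qed
qed

lemma lead_cone_mult: "lead_cone G p \<Longrightarrow> lead_cone G q \<Longrightarrow> lead_cone G (p * q)"
  using lead_coeff_mult[of p q] by (auto simp: lead_cone_def degree_mult_eq cone_mult)

lemma lead_cone_square: "lead_cone G (p * p)"
  using lead_coeff_mult[of p p] by (cases "p = 0") (auto simp: lead_cone_def degree_mult_eq cone_square)

theorem pointed_cone_lead_cone: "pointed_cone (lead_cone G)"
  by unfold_locales (use lead_cone_add lead_cone_mult lead_cone_square in auto)

end

text \<open>Good polynomials in R[x,y,z]: the cone obtained by lifting nonnegativity three times.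
  They contain all sums of squares of polynomials.\<close>
definition good3 :: "rpoly3 \<Rightarrow> bool" where
  "good3 = lead_cone (lead_cone (lead_cone (\<lambda>a::real. a \<ge> 0)))"

lemma pointed_cone_good3: "pointed_cone good3"
proof -
  have "pointed_cone (\<lambda>a::real. a \<ge> 0)" by unfold_locales auto
  then show ?thesis unfolding good3_def by (intro pointed_cone.pointed_cone_lead_cone)
qed

lemmas good3_add = pointed_cone.cone_add[OF pointed_cone_good3]
lemmas good3_mult = pointed_cone.cone_mult[OF pointed_cone_good3]
lemmas good3_square = pointed_cone.cone_square[OF pointed_cone_good3]

lemma good3_0: "good3 0"
  by (simp add: good3_def lead_cone_def)

section \<open>Leading exponents\<close>

locale leading_valuation =
  fixes ex :: "'a::idom \<Rightarrow> 'b::linorder"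
  assumes dominant_add: "a \<noteq> 0 \<Longrightarrow> b = 0 \<or> ex b < ex a \<Longrightarrow> a + b \<noteq> 0 \<and> ex (a + b) = ex a"
    and add_le_max: "ex (a + b) \<le> max (ex a) (ex b)"
    and zero_minimal: "ex 0 \<le> ex a"

definition lead_exp :: "('a::idom \<Rightarrow> 'b) \<Rightarrow> 'a poly \<Rightarrow> nat \<times> 'b" where
  "lead_exp ex p = (degree p, ex (lead_coeff p))"

context leading_valuation
begin

lemma lead_exp_dominant_add:
  assumes "p \<noteq> 0" "q = 0 \<or> lead_exp ex q < lead_exp ex p"
  shows "p + q \<noteq> 0 \<and> lead_exp ex (p + q) = lead_exp ex p"
proof (cases "q = 0")
  case True
  then show ?thesis using assms by simp
next
  case False
  then have "lead_exp ex q < lead_exp ex p" using assms by simp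
  then consider "degree q < degree p"
    | "degree q = degree p" "ex (lead_coeff q) < ex (lead_coeff p)"
    by (auto simp: lead_exp_def) (metis le_neq_implies_less)
  then show ?thesis
  proof cases
    case 1
    then show ?thesis using add_lower_degree[OF 1] unfolding lead_exp_def by metis
  next
    case 2
    have "lead_coeff p \<noteq> 0" using assms(1) by simp
    from dominant_add[OF this] 2 have "lead_coeff p + lead_coeff q \<noteq> 0"
        "ex (lead_coeff p + lead_coeff q) = ex (lead_coeff p)" by auto
    with add_same_degree[of p q] 2 show ?thesis by (simp add: lead_exp_def)
  qed
qed

lemma lead_exp_add_le_max: "lead_exp ex (p + q) \<le> max (lead_exp ex p) (lead_exp ex q)"
proof -
  consider "degree q < degree p" | "degree p < degree q" | "degree p = degree q" by linarith
  then show ?thesis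
  proof cases
    case 1
    then show ?thesis using add_lower_degree[OF 1] unfolding lead_exp_def by (metis max.cobounded1)
  next
    case 2
    then show ?thesis using add_lower_degree[OF 2] unfolding lead_exp_def
      by (metis add.commute max.cobounded2)
  next
    case 3
    have "degree (p + q) \<le> degree p" using degree_add_le[of p "degree p" q] 3 by simp
    moreover have "ex (lead_coeff (p + q)) \<le> max (ex (lead_coeff p)) (ex (lead_coeff q))"
      if "degree (p + q) = degree p"
      using that 3 add_le_max by simp
    ultimately show ?thesis using 3
      by (cases "degree (p + q) < degree p") (auto simp: lead_exp_def max_def)
  qed
qed

lemma lead_exp_zero_minimal: "lead_exp ex 0 \<le> lead_exp ex p"
  using zero_minimal by (auto simp: lead_exp_def)

theorem leading_valuation_lead_exp: "leading_valuation (lead_exp ex)"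
  by unfold_locales (use lead_exp_dominant_add lead_exp_add_le_max lead_exp_zero_minimal in auto)

lemma sum_below:
  assumes "finite I" "\<forall>i\<in>I. t i = 0 \<or> ex (t i) < L"
  shows "sum t I = 0 \<or> ex (sum t I) < L"
  using assms
proof (induction I rule: finite_induct)
  case (insert i I)
  then have "sum t I = 0 \<or> ex (sum t I) < L" "t i = 0 \<or> ex (t i) < L" by auto
  then have "t i + sum t I = 0 \<or> ex (t i + sum t I) < L"
    using add_le_max[of "t i" "sum t I"] by (auto simp: max_def split: if_splits)
  then show ?case using insert by simp
qed simp

text \<open>No cancellation among terms of pairwise distinct leading exponents: the term of
  largest exponent would survive in the sum.\<close>
theorem distinct_exponents_sum_zero:
  assumes "finite I"
    and distinct: "\<forall>i\<in>I. \<forall>j\<in>I. t i \<noteq> 0 \<longrightarrow> t j \<noteq> 0 \<longrightarrow> ex (t i) = ex (t j) \<longrightarrow> i = j"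
    and "sum t I = 0"
  shows "\<forall>i\<in>I. t i = 0"
proof (rule ccontr)
  assume "\<not> (\<forall>i\<in>I. t i = 0)"
  define N where "N = {i\<in>I. t i \<noteq> 0}"
  have N: "finite N" "N \<noteq> {}" using assms(1) \<open>\<not> _\<close> by (auto simp: N_def)
  obtain k where k: "k \<in> N" and k_max: "\<forall>j\<in>N. ex (t j) \<le> ex (t k)"
    using Max_in[of "(\<lambda>i. ex (t i)) ` N"] Max_ge[of "(\<lambda>i. ex (t i)) ` N"] N by fastforce
  have "\<forall>j\<in>I-{k}. t j = 0 \<or> ex (t j) < ex (t k)"
    using k k_max distinct by (fastforce simp: N_def order.strict_iff_order)
  then have "sum t (I-{k}) = 0 \<or> ex (sum t (I-{k})) < ex (t k)"
    using sum_below assms(1) by blast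
  moreover have "t k \<noteq> 0" "k \<in> I" using k by (auto simp: N_def)
  ultimately have "t k + sum t (I-{k}) \<noteq> 0" using dominant_add by blast
  moreover have "sum t I = t k + sum t (I-{k})" using \<open>k \<in> I\<close> assms(1) by (simp add: sum.remove)
  ultimately show False using \<open>sum t I = 0\<close> by simp
qed

end

definition ex3 :: "rpoly3 \<Rightarrow> nat \<times> nat \<times> nat \<times> unit" where
  "ex3 = lead_exp (lead_exp (lead_exp (\<lambda>a::real. ())))"

lemma leading_valuation_ex3: "leading_valuation ex3"
proof -
  have "leading_valuation (\<lambda>a::real. ())" by unfold_locales auto
  then show ?thesis unfolding ex3_def by (intro leading_valuation.leading_valuation_lead_exp)
qed

section \<open>Parities of leading exponents\<close>

definition par :: "rpoly3 \<Rightarrow> bool \<times> bool \<times> bool" where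
  "par p = (odd (degree p), odd (degree (lead_coeff p)), odd (degree (lead_coeff (lead_coeff p))))"

fun par_add :: "bool \<times> bool \<times> bool \<Rightarrow> bool \<times> bool \<times> bool \<Rightarrow> bool \<times> bool \<times> bool" where
  "par_add (a, b, c) (d, e, f) = (a \<noteq> d, b \<noteq> e, c \<noteq> f)"

text \<open>Leading exponents add under multiplication, so their parities add modulo 2.\<close>
lemma par_mult:
  assumes "p \<noteq> 0" "q \<noteq> 0"
  shows "par (p * q) = par_add (par p) (par q)"
proof -
  have "lead_coeff (p * q) = lead_coeff p * lead_coeff q"
    "lead_coeff (lead_coeff p * lead_coeff q) = lead_coeff (lead_coeff p) * lead_coeff (lead_coeff q)"
    by (rule lead_coeff_mult)+
  then show ?thesis using assms by (simp add: par_def degree_mult_eq)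
qed

lemma par_minus [simp]: "par (- p) = par p"
  by (simp add: par_def)

lemma par_ex3: "ex3 p = ex3 q \<Longrightarrow> par p = par q"
  unfolding ex3_def lead_exp_def par_def prod.inject by metis

lemma par_good: "good3 Q \<Longrightarrow> Q \<noteq> 0 \<Longrightarrow> par Q = (False, False, False)"
  by (auto simp: good3_def lead_cone_def par_def)

lemma par_good_mult: "good3 Q \<Longrightarrow> Q \<noteq> 0 \<Longrightarrow> m \<noteq> 0 \<Longrightarrow> par (Q * m) = par m"
  by (cases "par m") (simp add: par_mult par_good)

theorem distinct_parities_sum_zero:
  assumes "sum_list ts = 0"
    and "list_all2 (\<lambda>t \<pi>. t \<noteq> 0 \<longrightarrow> par t = \<pi>) ts ps"
    and "distinct ps"
  shows "\<forall>t\<in>set ts. t = 0"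
proof -
  let ?I = "{..<length ts}"
  have len: "length ps = length ts"
    and nth_par: "\<And>i. i \<in> ?I \<Longrightarrow> ts ! i \<noteq> 0 \<Longrightarrow> par (ts ! i) = ps ! i"
    using assms(2) by (auto simp: list_all2_conv_all_nth)
  have "\<forall>i\<in>?I. ts ! i = 0"
  proof (rule leading_valuation.distinct_exponents_sum_zero[OF leading_valuation_ex3])
    show "\<forall>i\<in>?I. \<forall>j\<in>?I. ts ! i \<noteq> 0 \<longrightarrow> ts ! j \<noteq> 0 \<longrightarrow> ex3 (ts ! i) = ex3 (ts ! j) \<longrightarrow> i = j"
      using nth_par par_ex3 assms(3) len by (metis distinct_conv_nth lessThan_iff)
    show "sum ((!) ts) ?I = 0"
      using assms(1) by (simp add: sum_list_sum_nth atLeast0LessThan)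
  qed simp
  then show ?thesis by (metis in_set_conv_nth lessThan_iff)
qed

lemma polyX_nonzero: "polyX \<noteq> 0" by (simp add: polyX_def)
lemma polyY_nonzero: "polyY \<noteq> 0" by (simp add: polyY_def)
lemma polyZ_nonzero: "polyZ \<noteq> 0" by (simp add: polyZ_def)

lemma par_monomials:
  "par 1 = (False, False, False)" "par polyX = (False, False, True)"
  "par polyY = (False, True, False)" "par polyZ = (True, False, False)"
  by (simp_all add: par_def polyX_def polyY_def polyZ_def)

theorem good_polynomial_identity:
  fixes Q0 Q1 Q2 Q3 Q4 Q5 Q6 Q7 :: rpoly3
  assumes "good3 Q0" "good3 Q1" "good3 Q2" "good3 Q3" "good3 Q4" "good3 Q5" "good3 Q6" "good3 Q7"
    and "Q0 * polyX * polyY + Q1 * polyZ = Q2 + Q3 * polyX + Q4 * polyY + Q5 * polyX * polyZ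
           + Q6 * polyY * polyZ + Q7 * polyX * polyY * polyZ"
  shows "Q0 = 0 \<and> Q1 = 0 \<and> Q2 = 0 \<and> Q3 = 0 \<and> Q4 = 0 \<and> Q5 = 0 \<and> Q6 = 0 \<and> Q7 = 0"
proof -
  define ms where "ms = [polyX * polyY, polyZ, 1, polyX, polyY, polyX * polyZ, polyY * polyZ,
    polyX * polyY * polyZ]"
  define ts where "ts = [Q0 * ms!0, Q1 * ms!1, - (Q2 * ms!2), - (Q3 * ms!3), - (Q4 * ms!4),
    - (Q5 * ms!5), - (Q6 * ms!6), - (Q7 * ms!7)]"
  note nonzero = polyX_nonzero polyY_nonzero polyZ_nonzero
  have "sum_list ts = 0" using assms(9) by (simp add: ts_def ms_def algebra_simps)
  moreover have "list_all2 (\<lambda>t \<pi>. t \<noteq> 0 \<longrightarrow> par t = \<pi>) ts (map par ms)"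
    using assms(1-8) by (simp add: ts_def ms_def par_good_mult par_good par_monomials nonzero)
  moreover have "distinct (map par ms)"
    by (simp add: ms_def par_mult par_monomials nonzero)
  ultimately have "\<forall>t\<in>set ts. t = 0" by (rule distinct_parities_sum_zero)
  then show ?thesis by (simp add: ts_def ms_def nonzero)
qed

section \<open>Clearing denominators\<close>

lemma var_to_fract: "varX = to_fract polyX" "varY = to_fract polyY" "varZ = to_fract polyZ"
  by (simp_all add: varX_def varY_def varZ_def to_fract_def)

lemma sos_clear_denominator:
  assumes "s \<in> sos"
  shows "\<exists>q P. q \<noteq> 0 \<and> good3 P \<and> s * to_fract (q * q) = to_fract P"
proof -
  obtain fs where s: "s = sum_list (map (\<lambda>g. g ^ 2) fs)" using assms by (auto simp: sos_def)
  have "\<exists>q P. q \<noteq> 0 \<and> good3 P \<and> sum_list (map (\<lambda>g. g ^ 2) fs) * to_fract (q * q) = to_fract P"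
  proof (induction fs)
    case Nil
    show ?case by (intro exI[of _ 1] exI[of _ 0]) (simp add: good3_0)
  next
    case (Cons g fs)
    then obtain q P where q: "q \<noteq> 0" and P: "good3 P"
      and eq: "sum_list (map (\<lambda>g. g ^ 2) fs) * to_fract (q * q) = to_fract P" by blast
    obtain a b where g: "g = Fract a b" "b \<noteq> 0" by (cases g)
    let ?S = "sum_list (map (\<lambda>g. g ^ 2) fs)" and ?c = "to_fract ((q * b) * (q * b))"
    have "g ^ 2 * ?c = to_fract (a * a * (q * q))"
      using g by (simp add: to_fract_def power2_eq_square eq_fract algebra_simps)
    moreover have "?S * ?c = to_fract (P * (b * b))"
      using eq by (simp add: ac_simps)
    ultimately have "sum_list (map (\<lambda>g. g ^ 2) (g # fs)) * ?c
        = to_fract (a * a * (q * q) + P * (b * b))"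
      by (simp only: list.map sum_list.Cons distrib_right to_fract_add)
    moreover have "good3 (a * a * (q * q) + P * (b * b))"
      by (intro good3_add good3_mult good3_square P)
    moreover have "q * b \<noteq> 0" using q g by simp
    ultimately show ?case by blast
  qed
  then show ?thesis using s by simp
qed

lemma scale_square_denominator:
  assumes "good3 P" "s * to_fract (d * d) = to_fract P"
  shows "good3 (P * (r * r)) \<and> s * to_fract ((d * r) * (d * r)) = to_fract (P * (r * r))"
proof -
  have "s * to_fract ((d * r) * (d * r)) = (s * to_fract (d * d)) * to_fract (r * r)"
    by (simp add: ac_simps)
  also have "\<dots> = to_fract (P * (r * r))" using assms(2) by simp
  finally show ?thesis using assms(1) by (simp add: good3_mult good3_square)
qed

lemma sos_common_denominator:
  assumes "set ss \<subseteq> sos"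
  shows "\<exists>D. D \<noteq> 0 \<and> (\<forall>s\<in>set ss. \<exists>P. good3 P \<and> s * to_fract (D * D) = to_fract P)"
  using assms
proof (induction ss)
  case Nil
  show ?case by (intro exI[of _ 1]) simp
next
  case (Cons s ss)
  then obtain D where D: "D \<noteq> 0" "\<forall>s'\<in>set ss. \<exists>P. good3 P \<and> s' * to_fract (D * D) = to_fract P"
    by auto
  have "s \<in> sos" using Cons.prems by simp
  then obtain q P where q: "q \<noteq> 0" "good3 P" "s * to_fract (q * q) = to_fract P"
    using sos_clear_denominator by blast
  have "\<exists>P. good3 P \<and> s' * to_fract ((q * D) * (q * D)) = to_fract P" if "s' \<in> set (s # ss)" for s'
  proof (cases "s' = s")
    case True
    then show ?thesis using scale_square_denominator[OF q(2,3), of D] by blast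
  next
    case False
    then have "s' \<in> set ss" using that by simp
    with D(2) obtain P' where "good3 P'" "s' * to_fract (D * D) = to_fract P'" by blast
    from scale_square_denominator[OF this, of q] show ?thesis by (metis mult.commute)
  qed
  then show ?case using q D by (intro exI[of _ "q * D"]) auto
qed

theorem mainTheorem6:
  fixes s0 s1 s2 s3 s4 s5 s6 s7 :: rfun3
  assumes "s0 \<in> sos" "s1 \<in> sos" "s2 \<in> sos" "s3 \<in> sos"
    and "s4 \<in> sos" "s5 \<in> sos" "s6 \<in> sos" "s7 \<in> sos"
    and "s0 * varX * varY + s1 * varZ
         = s2 + s3 * varX + s4 * varY + s5 * varX * varZ + s6 * varY * varZ
           + s7 * varX * varY * varZ"
  shows "s0 = 0 \<and> s1 = 0 \<and> s2 = 0 \<and> s3 = 0 \<and> s4 = 0 \<and> s5 = 0 \<and> s6 = 0 \<and> s7 = 0"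
proof -
  let ?ss = "[s0, s1, s2, s3, s4, s5, s6, s7]"
  obtain D where D: "D \<noteq> 0" "\<forall>s\<in>set ?ss. \<exists>P. good3 P \<and> s * to_fract (D * D) = to_fract P"
    using sos_common_denominator[of ?ss] assms(1-8) by auto
  define W where "W = to_fract (D * D)"
  obtain P where P: "\<And>s. s \<in> set ?ss \<Longrightarrow> good3 (P s) \<and> s * W = to_fract (P s)"
    using D(2) unfolding W_def by metis
  have "(s0 * W) * varX * varY + (s1 * W) * varZ = (s2 * W) + (s3 * W) * varX + (s4 * W) * varY
      + (s5 * W) * varX * varZ + (s6 * W) * varY * varZ + (s7 * W) * varX * varY * varZ"
    using arg_cong[OF assms(9), of "\<lambda>f. f * W"] by (simp add: algebra_simps)
  then have "to_fract (P s0 * polyX * polyY + P s1 * polyZ) = to_fract (P s2 + P s3 * polyX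
      + P s4 * polyY + P s5 * polyX * polyZ + P s6 * polyY * polyZ + P s7 * polyX * polyY * polyZ)"
    using P by (simp add: var_to_fract)
  then have "P s0 * polyX * polyY + P s1 * polyZ = P s2 + P s3 * polyX + P s4 * polyY
      + P s5 * polyX * polyZ + P s6 * polyY * polyZ + P s7 * polyX * polyY * polyZ"
    by (simp only: to_fract_eq_iff)
  then have zero: "\<forall>s\<in>set ?ss. P s = 0"
    using good_polynomial_identity[of "P s0" "P s1" "P s2" "P s3" "P s4" "P s5" "P s6" "P s7"] P
    by simp
  have "W \<noteq> 0" using D(1) by (simp add: W_def)
  then have "s = 0" if "s \<in> set ?ss" for s
    using P[OF that] zero[rule_format, OF that] by simp
  then show ?thesis by simp
qed

end
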